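(* Let $G_\bullet$ be a filtration of length $d$ on a nilpotent Lie group $G$ and $\Gamma<G$ a discrete cocompact subgroup such that $G_\bullet$ is $\Gamma$-rational. A map $\bar f:\mathscr F_\emptyset\to G/\Gamma$ belongs to $\mathrm{poly}(\mathscr F_\emptyset\to G_\bullet/\Gamma)$ if and only if for every $k\ge0$ and every parallelepiped $(\alpha_\omega)_{\omega\in\{0,1\}^k}\in\mathscr F_\emptyset^{[k]}$ the cube $(\bar f(\alpha_\omega))_{\omega\in\{0,1\}^k}$ lies in $\mathrm{HK}^k(G_\bullet/\Gamma)$.
   Context: $\mathscr F$ is the family of finite non-empty subsets of $\mathbb N=\{1,2,\dots\}$, $\mathscr F_\emptyset=\mathscr F\cup\{\emptyset\}$. A filtration $G_\bullet$: Lie subgroups $G=G_0=G_1\supseteq G_2\supseteq\cdots$ with $[G_i,G_j]\subseteq G_{i+j}$ and $G_{d+1}=\{e\}$ ($d$ minimal = length); $G_{\bullet+1}$ is $i\mapsto G_{i+1}$. $\Gamma$-rational: $G_i\cap\Gamma$ is cocompact in $G_i$ for all $i$. A map $g:\mathscr F_\emptyset\to G$ is in $\mathrm{poly}(\mathscr F_\emptyset\to G_\bullet)$ if either $G_0=\{e\}$ and $g\equiv e$, or for each $\beta\in\mathscr F_\emptyset$ there is $D_\beta g\in\mathrm{poly}(\mathscr F_\emptyset\to G_{\bullet+1})$ with $D_\beta g(\alpha)=g(\alpha)^{-1}g(\alpha\cup\beta)$ whenever $\alpha\cap\beta=\emptyset$; $\mathrm{poly}(\mathscr F_\emptyset\to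 G_\bullet/\Gamma)$ is the set of maps $\alpha\mapsto g(\alpha)\Gamma$ with $g$ such a polynomial. Identify $\{0,1\}^k$ with subsets of $[k]$, ordered by $\omega\le\sigma$ iff $\omega_i\le\sigma_i$ for all $i$; $|\omega|$ is the number of $1$'s. For $g\in G$, $g^{[\omega]}\in G^{\{0,1\}^k}$ has entry $g$ at $\sigma\ge\omega$ and $e$ elsewhere. The Host–Kra cube group $\mathrm{HK}^k(G_\bullet)$ is the subgroup of $G^{\{0,1\}^k}$ generated by all $g^{[\omega]}$ with $\omega\in\{0,1\}^k$ and $g\in G_{|\omega|}$; $\mathrm{HK}^k(G_\bullet/\Gamma)=\mathrm{HK}^k(G_\bullet)/(\Gamma^{\{0,1\}^k}\cap\mathrm{HK}^k(G_\bullet))$, viewed as the image of $\mathrm{HK}^k(G_\bullet)$ in $(G/\Gamma)^{\{0,1\}^k}$. $\mathscr F_\emptyset^{[k]}$ is the set of parallelepipeds: families $(\alpha_\omega)_{\omega\in\{0,1\}^k}$ with $\alpha_\omega=\alpha_0\cup\bigcup_{i\in\omega}\alpha_i$ for some pairwise disjoint $\alpha_0,\alpha_1,\dots,\alpha_k\in\mathscr F_\emptyset$. *)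

theory Defs
  imports "HOL-Analysis.Analysis" "HOL-Algebra.Algebra"
begin

definition topological_group :: "('a, 'b) monoid_scheme \<Rightarrow> 'a topology \<Rightarrow> bool" where
  "topological_group G T \<longleftrightarrow> group G \<and> topspace T = carrier G \<and>
     continuous_map (prod_topology T T) T (\<lambda>(x, y). x \<otimes>\<^bsub>G\<^esub> y) \<and>
     continuous_map T T (\<lambda>x. inv\<^bsub>G\<^esub> x)"

text \<open>A (real) Lie group, modelled as a topological group which is a topological manifold
  (Hausdorff, second countable, locally Euclidean of some fixed dimension n).  By the
  Gleason--Montgomery--Zippin theorem such a group carries a unique compatible analytic
  Lie group structure.\<close>
definition lie_group :: "('a, 'b) monoid_scheme \<Rightarrow> 'a topology \<Rightarrow> bool" where
  "lie_group G T \<longleftrightarrow> topological_group G T \<and> Hausdorff_space T \<and> second_countable T \<and>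
     (\<exists>n. \<forall>x\<in>topspace T. \<exists>U V. openin T U \<and> x \<in> U \<and> openin (Euclidean_space n) V \<and>
          (subtopology T U) homeomorphic_space (subtopology (Euclidean_space n) V))"

text \<open>Lie subgroup of a Lie group: a closed subgroup (closed subgroups are embedded
  Lie subgroups by Cartan's theorem).\<close>
definition lie_subgroup :: "'a set \<Rightarrow> ('a, 'b) monoid_scheme \<Rightarrow> 'a topology \<Rightarrow> bool" where
  "lie_subgroup H G T \<longleftrightarrow> subgroup H G \<and> closedin T H"

definition discrete_subgroup :: "'a set \<Rightarrow> ('a, 'b) monoid_scheme \<Rightarrow> 'a topology \<Rightarrow> bool" where
  "discrete_subgroup \<Gamma> G T \<longleftrightarrow> subgroup \<Gamma> G \<and> subtopology T \<Gamma> = discrete_topology \<Gamma>"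

text \<open>A subgroup \<open>L\<close> of \<open>H\<close> is cocompact in \<open>H\<close> if \<open>H/L\<close> is compact, i.e. there is a compact
  \<open>K \<subseteq> H\<close> with \<open>H = K L\<close>.\<close>
definition cocompact_in :: "'a set \<Rightarrow> 'a set \<Rightarrow> ('a, 'b) monoid_scheme \<Rightarrow> 'a topology \<Rightarrow> bool" where
  "cocompact_in L H G T \<longleftrightarrow> (\<exists>K. K \<subseteq> H \<and> compactin T K \<and> H = K <#>\<^bsub>G\<^esub> L)"

definition filtration :: "('a, 'b) monoid_scheme \<Rightarrow> 'a topology \<Rightarrow> (nat \<Rightarrow> 'a set) \<Rightarrow> nat \<Rightarrow> bool" where
  "filtration G T Gs d \<longleftrightarrow>
     Gs 0 = carrier G \<and> Gs 1 = carrier G \<and>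
     (\<forall>i. lie_subgroup (Gs i) G T) \<and>
     (\<forall>i. Gs (Suc i) \<subseteq> Gs i) \<and>
     (\<forall>i j. \<forall>x\<in>Gs i. \<forall>y\<in>Gs j.
         inv\<^bsub>G\<^esub> x \<otimes>\<^bsub>G\<^esub> inv\<^bsub>G\<^esub> y \<otimes>\<^bsub>G\<^esub> x \<otimes>\<^bsub>G\<^esub> y \<in> Gs (i + j)) \<and>
     Gs (Suc d) = {\<one>\<^bsub>G\<^esub>} \<and> (d = 0 \<or> Gs d \<noteq> {\<one>\<^bsub>G\<^esub>})"

definition rational_filtration :: "('a, 'b) monoid_scheme \<Rightarrow> 'a topology \<Rightarrow> (nat \<Rightarrow> 'a set) \<Rightarrow> 'a set \<Rightarrow> bool" where
  "rational_filtration G T Gs \<Gamma> \<longleftrightarrow> (\<forall>i. cocompact_in (Gs i \<inter> \<Gamma>) (Gs i) G T)"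

definition FE :: "nat set set" where
  "FE = {\<alpha>. finite \<alpha> \<and> 0 \<notin> \<alpha>}"

inductive poly_map :: "('a, 'b) monoid_scheme \<Rightarrow> (nat \<Rightarrow> 'a set) \<Rightarrow> (nat set \<Rightarrow> 'a) \<Rightarrow> bool"
  for G where
  triv: "Gs 0 = {\<one>\<^bsub>G\<^esub>} \<Longrightarrow> (\<forall>\<alpha>\<in>FE. g \<alpha> = \<one>\<^bsub>G\<^esub>) \<Longrightarrow> poly_map G Gs g"
| step: "(\<forall>\<alpha>\<in>FE. g \<alpha> \<in> Gs 0) \<Longrightarrow>
         (\<forall>\<beta>\<in>FE. \<exists>h. poly_map G (\<lambda>i. Gs (Suc i)) h \<and>
            (\<forall>\<alpha>\<in>FE. \<alpha> \<inter> \<beta> = {} \<longrightarrow> h \<alpha> = inv\<^bsub>G\<^esub> (g \<alpha>) \<otimes>\<^bsub>G\<^esub> g (\<alpha> \<union> \<beta>))) \<Longrightarrow>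
         poly_map G Gs g"

text \<open>Maps \<open>\<F>\<^sub>\<emptyset> \<rightarrow> G/\<Gamma>\<close>, cosets represented as left cosets \<open>x \<Gamma>\<close>.\<close>
definition poly_map_quot :: "('a, 'b) monoid_scheme \<Rightarrow> (nat \<Rightarrow> 'a set) \<Rightarrow> 'a set \<Rightarrow> (nat set \<Rightarrow> 'a set) \<Rightarrow> bool" where
  "poly_map_quot G Gs \<Gamma> fb \<longleftrightarrow> (\<exists>g. poly_map G Gs g \<and> (\<forall>\<alpha>\<in>FE. fb \<alpha> = g \<alpha> <#\<^bsub>G\<^esub> \<Gamma>))"

text \<open>Cubes in \<open>G^{{0,1}^k}\<close> are functions on subsets \<open>\<omega> \<subseteq> {1..k}\<close>, extended by \<open>\<one>\<close>
  outside that domain.  \<open>gen_cube G k g \<omega>\<close> is \<open>g\<^sup>[\<omega>]\<close>.\<close>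
definition gen_cube :: "('a, 'b) monoid_scheme \<Rightarrow> nat \<Rightarrow> 'a \<Rightarrow> nat set \<Rightarrow> nat set \<Rightarrow> 'a" where
  "gen_cube G k g \<omega> = (\<lambda>\<sigma>. if \<omega> \<subseteq> \<sigma> \<and> \<sigma> \<subseteq> {1..k} then g else \<one>\<^bsub>G\<^esub>)"

inductive_set HK :: "('a, 'b) monoid_scheme \<Rightarrow> nat \<Rightarrow> (nat \<Rightarrow> 'a set) \<Rightarrow> (nat set \<Rightarrow> 'a) set"
  for G k Gs where
  one: "(\<lambda>\<sigma>. \<one>\<^bsub>G\<^esub>) \<in> HK G k Gs"
| gen: "\<omega> \<subseteq> {1..k} \<Longrightarrow> g \<in> Gs (card \<omega>) \<Longrightarrow> gen_cube G k g \<omega> \<in> HK G k Gs"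
| mult: "c \<in> HK G k Gs \<Longrightarrow> c' \<in> HK G k Gs \<Longrightarrow> (\<lambda>\<sigma>. c \<sigma> \<otimes>\<^bsub>G\<^esub> c' \<sigma>) \<in> HK G k Gs"
| inv: "c \<in> HK G k Gs \<Longrightarrow> (\<lambda>\<sigma>. inv\<^bsub>G\<^esub> (c \<sigma>)) \<in> HK G k Gs"

definition in_HK_quot :: "('a, 'b) monoid_scheme \<Rightarrow> nat \<Rightarrow> (nat \<Rightarrow> 'a set) \<Rightarrow> 'a set \<Rightarrow> (nat set \<Rightarrow> 'a set) \<Rightarrow> bool" where
  "in_HK_quot G k Gs \<Gamma> cb \<longleftrightarrow>
     (\<exists>c\<in>HK G k Gs. \<forall>\<omega>. \<omega> \<subseteq> {1..k} \<longrightarrow> cb \<omega> = c \<omega> <#\<^bsub>G\<^esub> \<Gamma>)"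

definition parallelepiped_base :: "nat \<Rightarrow> (nat \<Rightarrow> nat set) \<Rightarrow> bool" where
  "parallelepiped_base k a \<longleftrightarrow> (\<forall>i\<le>k. a i \<in> FE) \<and>
     (\<forall>i\<le>k. \<forall>j\<le>k. i \<noteq> j \<longrightarrow> a i \<inter> a j = {})"

definition parallelepiped_vertex :: "(nat \<Rightarrow> nat set) \<Rightarrow> nat set \<Rightarrow> nat set" where
  "parallelepiped_vertex a \<omega> = a 0 \<union> (\<Union>i\<in>\<omega>. a i)"

end

theory Submission
  imports Defs
begin

text \<open>A map \<open>g\<close> is polynomial for \<open>G\<^sub>\<bullet>\<close> exactly when, for every finite \<open>\<alpha>\<close>, its values on
  the subsets of \<open>\<alpha>\<close> form a cube of \<open>HK\<^sup>\<alpha>(G\<^sub>\<bullet>)\<close>. The derivative in a new direction \<open>m\<close> of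
  a cube over \<open>\<alpha> \<union> {m}\<close> is a cube of the shifted filtration over \<open>\<alpha>\<close> (the product rule goes
  through because \<open>HK(G\<^sub>\<bullet>)\<close> normalises \<open>HK(G\<^sub>\<bullet>\<^sub>+\<^sub>1)\<close>), and conversely a face together
  with its derivative reassembles to a cube. Parallelepipeds are pullbacks of such cubes, which
  gives the forward implication.

  For the converse, lifts \<open>g(\<alpha>) \<in> fb(\<alpha>)\<close> are chosen by induction on \<open>|\<alpha>|\<close>. The lifts on
  the proper subsets of \<open>\<alpha>\<close> complete to a cube of \<open>HK\<^sup>\<alpha>(G\<^sub>\<bullet>)\<close> for a suitable top vertex.
  Dividing by a cube that lifts \<open>fb\<close> on all subsets of \<open>\<alpha>\<close> leaves a cube whose lower vertices
  lie in \<open>\<Gamma>\<close>, so its top vertex lies in \<open>G\<^sub>|\<^sub>\<alpha>\<^sub>| \<Gamma>\<close>; the \<open>G\<^sub>|\<^sub>\<alpha>\<^sub>|\<close> factor is absorbed into the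
  top vertex of the completed cube.\<close>

definition gen_cube_on :: "('a, 'b) monoid_scheme \<Rightarrow> nat set \<Rightarrow> 'a \<Rightarrow> nat set \<Rightarrow> nat set \<Rightarrow> 'a" where
  "gen_cube_on G I g \<omega> = (\<lambda>\<sigma>. if \<omega> \<subseteq> \<sigma> \<and> \<sigma> \<subseteq> I then g else \<one>\<^bsub>G\<^esub>)"

text \<open>\<open>HK G k\<close> with \<open>{1..k}\<close> replaced by an arbitrary index set, so that faces and
  derivatives of cubes are again of this form.\<close>
inductive_set HK_on :: "('a, 'b) monoid_scheme \<Rightarrow> nat set \<Rightarrow> (nat \<Rightarrow> 'a set) \<Rightarrow> (nat set \<Rightarrow> 'a) set"
  for G I Gs where
  one: "(\<lambda>\<sigma>. \<one>\<^bsub>G\<^esub>) \<in> HK_on G I Gs"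
| gen: "\<omega> \<subseteq> I \<Longrightarrow> g \<in> Gs (card \<omega>) \<Longrightarrow> gen_cube_on G I g \<omega> \<in> HK_on G I Gs"
| mult: "c \<in> HK_on G I Gs \<Longrightarrow> c' \<in> HK_on G I Gs \<Longrightarrow> (\<lambda>\<sigma>. c \<sigma> \<otimes>\<^bsub>G\<^esub> c' \<sigma>) \<in> HK_on G I Gs"
| inv: "c \<in> HK_on G I Gs \<Longrightarrow> (\<lambda>\<sigma>. inv\<^bsub>G\<^esub> (c \<sigma>)) \<in> HK_on G I Gs"

lemma HK_eq_HK_on: "HK G k Gs = HK_on G {1..k} Gs"
proof -
  have gen_eq: "gen_cube G k = gen_cube_on G {1..k}"
    by (simp add: fun_eq_iff gen_cube_def gen_cube_on_def)
  show ?thesis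
  proof safe
    fix c assume "c \<in> HK G k Gs" then show "c \<in> HK_on G {1..k} Gs"
    proof induct
      case (gen \<omega> g) then show ?case using HK_on.gen[of \<omega> "{1..k}" g Gs G] by (simp add: gen_eq)
    qed (auto intro: HK_on.intros)
  next
    fix c assume "c \<in> HK_on G {1..k} Gs" then show "c \<in> HK G k Gs"
    proof induct
      case (gen \<omega> g) then show ?case using HK.gen[of \<omega> k g Gs G] by (simp add: gen_eq)
    qed (auto intro: HK.intros)
  qed
qed

text \<open>The algebraic part of a filtration, without \<open>G\<^sub>0 = G\<^sub>1 = G\<close>, so that it is
  preserved by the shift \<open>G\<^sub>\<bullet> \<mapsto> G\<^sub>\<bullet>\<^sub>+\<^sub>1\<close>.\<close>
definition group_filtration :: "('a, 'b) monoid_scheme \<Rightarrow> (nat \<Rightarrow> 'a set) \<Rightarrow> bool" where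
  "group_filtration G Gs \<longleftrightarrow> (\<forall>i. subgroup (Gs i) G) \<and> antimono Gs \<and>
     (\<forall>i. \<forall>x\<in>carrier G. \<forall>y\<in>Gs i. inv\<^bsub>G\<^esub> x \<otimes>\<^bsub>G\<^esub> y \<otimes>\<^bsub>G\<^esub> x \<in> Gs i) \<and>
     (\<forall>i j. \<forall>x\<in>Gs i. \<forall>y\<in>Gs j. inv\<^bsub>G\<^esub> x \<otimes>\<^bsub>G\<^esub> inv\<^bsub>G\<^esub> y \<otimes>\<^bsub>G\<^esub> x \<otimes>\<^bsub>G\<^esub> y \<in> Gs (i + j))"

lemma
  assumes "group_filtration G Gs"
  shows group_filtration_subgroup: "subgroup (Gs i) G"
    and group_filtration_antimono: "i \<le> j \<Longrightarrow> Gs j \<subseteq> Gs i"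
    and group_filtration_conj: "x \<in> carrier G \<Longrightarrow> y \<in> Gs i \<Longrightarrow> inv\<^bsub>G\<^esub> x \<otimes>\<^bsub>G\<^esub> y \<otimes>\<^bsub>G\<^esub> x \<in> Gs i"
    and group_filtration_commutator:
      "x \<in> Gs i \<Longrightarrow> y \<in> Gs j \<Longrightarrow> inv\<^bsub>G\<^esub> x \<otimes>\<^bsub>G\<^esub> inv\<^bsub>G\<^esub> y \<otimes>\<^bsub>G\<^esub> x \<otimes>\<^bsub>G\<^esub> y \<in> Gs (i + j)"
  using assms unfolding group_filtration_def by (auto dest: antimonoD)

lemma group_filtration_shift:
  assumes f: "group_filtration G Gs"
  shows "group_filtration G (\<lambda>i. Gs (Suc i))"
  unfolding group_filtration_def
proof (intro conjI allI ballI)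
  show "antimono (\<lambda>i. Gs (Suc i))"
    using group_filtration_antimono[OF f] by (intro antimonoI) simp
  fix i j x y
  assume x: "x \<in> Gs (Suc i)" and y: "y \<in> Gs (Suc j)"
  have "Gs (Suc i + Suc j) \<subseteq> Gs (Suc (i + j))"
    by (rule group_filtration_antimono[OF f]) simp
  then show "inv\<^bsub>G\<^esub> x \<otimes>\<^bsub>G\<^esub> inv\<^bsub>G\<^esub> y \<otimes>\<^bsub>G\<^esub> x \<otimes>\<^bsub>G\<^esub> y \<in> Gs (Suc (i + j))"
    using group_filtration_commutator[OF f x y] by blast
qed (use group_filtration_subgroup[OF f] group_filtration_conj[OF f] in auto)

definition cube_restrict :: "('a, 'b) monoid_scheme \<Rightarrow> nat set \<Rightarrow> (nat set \<Rightarrow> 'a) \<Rightarrow> nat set \<Rightarrow> 'a" where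
  "cube_restrict G J c = (\<lambda>\<sigma>. if \<sigma> \<subseteq> J then c \<sigma> else \<one>\<^bsub>G\<^esub>)"

definition cube_deriv :: "('a, 'b) monoid_scheme \<Rightarrow> nat \<Rightarrow> (nat set \<Rightarrow> 'a) \<Rightarrow> nat set \<Rightarrow> 'a" where
  "cube_deriv G m c = (\<lambda>\<sigma>. if m \<in> \<sigma> then \<one>\<^bsub>G\<^esub> else inv\<^bsub>G\<^esub> (c \<sigma>) \<otimes>\<^bsub>G\<^esub> c (insert m \<sigma>))"

context group
begin

lemma mult_inv_cancel_left [simp]: "x \<in> carrier G \<Longrightarrow> y \<in> carrier G \<Longrightarrow> x \<otimes> (inv x \<otimes> y) = y"
  by (simp add: m_assoc[symmetric])

lemma inv_mult_cancel_left [simp]: "x \<in> carrier G \<Longrightarrow> y \<in> carrier G \<Longrightarrow> inv x \<otimes> (x \<otimes> y) = y"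
  by (simp add: m_assoc[symmetric])

lemma cube_deriv_mult:
  assumes "\<And>\<sigma>. c \<sigma> \<in> carrier G" and "\<And>\<sigma>. c' \<sigma> \<in> carrier G"
  shows "cube_deriv G m (\<lambda>\<sigma>. c \<sigma> \<otimes> c' \<sigma>)
    = (\<lambda>\<sigma>. inv (c' \<sigma>) \<otimes> cube_deriv G m c \<sigma> \<otimes> c' \<sigma> \<otimes> cube_deriv G m c' \<sigma>)"
  using assms by (simp add: fun_eq_iff cube_deriv_def m_assoc inv_mult_group)

lemma cube_deriv_restrict:
  assumes "m \<notin> K"
  shows "cube_deriv G m (cube_restrict G (insert m K) x)
    = cube_restrict G K (\<lambda>\<sigma>. inv (x \<sigma>) \<otimes> x (insert m \<sigma>))"
proof
  fix \<sigma>
  consider "m \<in> \<sigma>" | "m \<notin> \<sigma>" "\<sigma> \<subseteq> K" | "m \<notin> \<sigma>" "\<not> \<sigma> \<subseteq> K" by blast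
  then show "cube_deriv G m (cube_restrict G (insert m K) x) \<sigma>
      = cube_restrict G K (\<lambda>\<sigma>. inv (x \<sigma>) \<otimes> x (insert m \<sigma>)) \<sigma>"
  proof cases
    case 1
    then have "\<not> \<sigma> \<subseteq> K" using assms by blast
    then show ?thesis using 1 by (simp add: cube_restrict_def cube_deriv_def)
  next
    case 2
    then have "\<sigma> \<subseteq> insert m K" "insert m \<sigma> \<subseteq> insert m K" by blast+
    then show ?thesis using 2 by (simp add: cube_restrict_def cube_deriv_def)
  next
    case 3
    then have "\<not> \<sigma> \<subseteq> insert m K" "\<not> insert m \<sigma> \<subseteq> insert m K" by blast+
    then show ?thesis using 3 by (simp add: cube_restrict_def cube_deriv_def inv_one)
  qed
qed

lemma filtration_imp_group_filtration:
  assumes "filtration G T Gs d"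
  shows "group_filtration G Gs"
proof -
  have G0: "Gs 0 = carrier G" and S: "\<And>i. subgroup (Gs i) G"
    and dec: "\<And>i. Gs (Suc i) \<subseteq> Gs i"
    and comm: "\<And>i j x y. x \<in> Gs i \<Longrightarrow> y \<in> Gs j \<Longrightarrow> inv x \<otimes> inv y \<otimes> x \<otimes> y \<in> Gs (i + j)"
    using assms unfolding filtration_def lie_subgroup_def by blast+
  have "inv x \<otimes> y \<otimes> x \<in> Gs i" if x: "x \<in> carrier G" and y: "y \<in> Gs i" for i x y
  proof -
    have yc: "y \<in> carrier G" using subgroup.mem_carrier[OF S y] .
    have "y \<otimes> (inv y \<otimes> inv x \<otimes> y \<otimes> x) \<in> Gs i"
      using subgroup.m_closed[OF S y] comm[OF y, of x 0] x G0 by simp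
    then show ?thesis using x yc by (simp add: m_assoc)
  qed
  then show ?thesis
    unfolding group_filtration_def antimono_iff_le_Suc using S dec comm by blast
qed

lemma HK_on_level_0:
  assumes f: "group_filtration G Gs" and c: "c \<in> HK_on G I Gs"
  shows "c \<sigma> \<in> Gs 0"
proof -
  note S = group_filtration_subgroup[OF f, of 0]
  from c show ?thesis
  proof induct
    case one
    show ?case using subgroup.one_closed[OF S] .
  next
    case (gen \<omega> g)
    then have "g \<in> Gs 0" using group_filtration_antimono[OF f, of 0 "card \<omega>"] by blast
    then show ?case using subgroup.one_closed[OF S] by (simp add: gen_cube_on_def)
  next
    case (mult c c')
    then show ?case using subgroup.m_closed[OF S] by blast
  next
    case (inv c)
    then show ?case using subgroup.m_inv_closed[OF S] by blast
  qed
qed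

lemma HK_on_carrier: "group_filtration G Gs \<Longrightarrow> c \<in> HK_on G I Gs \<Longrightarrow> c \<sigma> \<in> carrier G"
  using HK_on_level_0 group_filtration_subgroup subgroup.mem_carrier by metis

lemma HK_on_outside: "c \<in> HK_on G I Gs \<Longrightarrow> \<not> \<sigma> \<subseteq> I \<Longrightarrow> c \<sigma> = \<one>"
  by (induct rule: HK_on.induct) (auto simp: gen_cube_on_def)

text \<open>Inverses of generators are generators.\<close>
lemma HK_on_gen_induct [consumes 2, case_names one gen mult]:
  assumes f: "group_filtration G Gs" and c: "c \<in> HK_on G I Gs"
    and P_one: "P (\<lambda>\<sigma>. \<one>)"
    and P_gen: "\<And>\<omega> g. \<omega> \<subseteq> I \<Longrightarrow> g \<in> Gs (card \<omega>) \<Longrightarrow> P (gen_cube_on G I g \<omega>)"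
    and P_mult: "\<And>c c'. c \<in> HK_on G I Gs \<Longrightarrow> P c \<Longrightarrow> c' \<in> HK_on G I Gs \<Longrightarrow> P c' \<Longrightarrow>
      P (\<lambda>\<sigma>. c \<sigma> \<otimes> c' \<sigma>)"
  shows "P c"
proof -
  have "P c \<and> P (\<lambda>\<sigma>. inv (c \<sigma>))"
    using c
  proof induct
    case one
    then show ?case using P_one by simp
  next
    case (gen \<omega> g)
    have "inv g \<in> Gs (card \<omega>)"
      using gen(2) subgroup.m_inv_closed[OF group_filtration_subgroup[OF f]] by blast
    moreover have "(\<lambda>\<sigma>. inv (gen_cube_on G I g \<omega> \<sigma>)) = gen_cube_on G I (inv g) \<omega>"
      by (simp add: fun_eq_iff gen_cube_on_def)
    ultimately show ?case using P_gen[OF gen] P_gen[OF gen(1)] by simp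
  next
    case (mult c c')
    have "(\<lambda>\<sigma>. inv (c \<sigma> \<otimes> c' \<sigma>)) = (\<lambda>\<sigma>. inv (c' \<sigma>) \<otimes> inv (c \<sigma>))"
      using HK_on_carrier[OF f] mult(1,3) by (simp add: fun_eq_iff inv_mult_group)
    then show ?case
      using mult P_mult[of c c'] P_mult[OF HK_on.inv[OF mult(3)] _ HK_on.inv[OF mult(1)]] by simp
  next
    case (inv c)
    have "(\<lambda>\<sigma>. inv (inv (c \<sigma>))) = c"
      using HK_on_carrier[OF f inv(1)] by (simp add: fun_eq_iff)
    then show ?case using inv by simp
  qed
  then show ?thesis ..
qed

lemma HK_on_reindex:
  assumes c: "c \<in> HK_on G I Gs"
    and gen: "\<And>\<omega> g. \<omega> \<subseteq> I \<Longrightarrow> g \<in> Gs (card \<omega>) \<Longrightarrow>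
      (\<lambda>\<sigma>. if P \<sigma> then gen_cube_on G I g \<omega> (f \<sigma>) else \<one>) \<in> HK_on G J Hs"
  shows "(\<lambda>\<sigma>. if P \<sigma> then c (f \<sigma>) else \<one>) \<in> HK_on G J Hs"
  using c
proof induct
  case one
  then show ?case by (simp add: HK_on.one)
next
  case (gen \<omega> g)
  then show ?case by (rule assms(2))
next
  case (mult c c')
  have "(\<lambda>\<sigma>. if P \<sigma> then c (f \<sigma>) \<otimes> c' (f \<sigma>) else \<one>)
      = (\<lambda>\<sigma>. (if P \<sigma> then c (f \<sigma>) else \<one>) \<otimes> (if P \<sigma> then c' (f \<sigma>) else \<one>))"
    by (simp add: fun_eq_iff)
  then show ?case using HK_on.mult[OF mult(2,4)] by simp
next
  case (inv c)
  have "(\<lambda>\<sigma>. if P \<sigma> then inv (c (f \<sigma>)) else \<one>) = (\<lambda>\<sigma>. inv (if P \<sigma> then c (f \<sigma>) else \<one>))"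
    by (simp add: fun_eq_iff)
  then show ?case using HK_on.inv[OF inv(2)] by simp
qed

lemma cube_restrict_HK_on:
  assumes c: "c \<in> HK_on G I Gs" and J: "J \<subseteq> I"
  shows "cube_restrict G J c \<in> HK_on G J Gs"
proof -
  have "(\<lambda>\<sigma>. if \<sigma> \<subseteq> J then c \<sigma> else \<one>) \<in> HK_on G J Gs"
  proof (rule HK_on_reindex[OF c])
    fix \<omega> g assume g: "\<omega> \<subseteq> I" "g \<in> Gs (card \<omega>)"
    show "(\<lambda>\<sigma>. if \<sigma> \<subseteq> J then gen_cube_on G I g \<omega> \<sigma> else \<one>) \<in> HK_on G J Gs"
    proof (cases "\<omega> \<subseteq> J")
      case True
      then have "(\<lambda>\<sigma>. if \<sigma> \<subseteq> J then gen_cube_on G I g \<omega> \<sigma> else \<one>) = gen_cube_on G J g \<omega>"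
        using J by (auto simp: gen_cube_on_def fun_eq_iff)
      then show ?thesis using True g(2) by (simp add: HK_on.gen)
    next
      case False
      then have "(\<lambda>\<sigma>. if \<sigma> \<subseteq> J then gen_cube_on G I g \<omega> \<sigma> else \<one>) = (\<lambda>\<sigma>. \<one>)"
        by (auto simp: gen_cube_on_def fun_eq_iff)
      then show ?thesis by (simp add: HK_on.one)
    qed
  qed
  then show ?thesis by (simp add: cube_restrict_def)
qed

lemma HK_on_conj_gen_cube:
  assumes f: "group_filtration G Gs" and \<omega>: "\<omega> \<subseteq> I" and g: "g \<in> Gs (card \<omega>)"
    and b: "b \<in> HK_on G I (\<lambda>i. Gs (Suc i))"
  shows "(\<lambda>\<sigma>. inv (gen_cube_on G I g \<omega> \<sigma>) \<otimes> b \<sigma> \<otimes> gen_cube_on G I g \<omega> \<sigma>) \<in> HK_on G I (\<lambda>i. Gs (Suc i))"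
proof -
  let ?a = "gen_cube_on G I g \<omega>"
  note f' = group_filtration_shift[OF f]
  have gc: "g \<in> carrier G" using subgroup.mem_carrier[OF group_filtration_subgroup[OF f] g] .
  then have ac: "?a \<sigma> \<in> carrier G" for \<sigma> by (simp add: gen_cube_on_def)
  from f' b show ?thesis
  proof (induct rule: HK_on_gen_induct)
    case one
    then show ?case using ac by (simp add: HK_on.one)
  next
    case (gen \<eta> h)
    have hc: "h \<in> carrier G" using subgroup.mem_carrier[OF group_filtration_subgroup[OF f'] gen(2)] .
    define k where "k = inv h \<otimes> inv g \<otimes> h \<otimes> g"
    have "k \<in> Gs (Suc (card \<eta>) + card \<omega>)"
      unfolding k_def using group_filtration_commutator[OF f gen(2) g] .
    moreover have "Gs (Suc (card \<eta>) + card \<omega>) \<subseteq> Gs (Suc (card (\<eta> \<union> \<omega>)))"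
      using card_Un_le[of \<eta> \<omega>] by (intro group_filtration_antimono[OF f]) simp
    ultimately have k: "k \<in> Gs (Suc (card (\<eta> \<union> \<omega>)))" by blast
    text \<open>Conjugating \<open>h\<^sup>[\<eta>]\<close> by \<open>g\<^sup>[\<omega>]\<close> produces the commutator on the face \<open>\<eta> \<union> \<omega>\<close>,
      whose level is higher by \<open>|\<omega>|\<close>.\<close>
    have "(\<lambda>\<sigma>. inv (?a \<sigma>) \<otimes> gen_cube_on G I h \<eta> \<sigma> \<otimes> ?a \<sigma>)
        = (\<lambda>\<sigma>. gen_cube_on G I h \<eta> \<sigma> \<otimes> gen_cube_on G I k (\<eta> \<union> \<omega>) \<sigma>)"
      using gc hc by (auto simp: fun_eq_iff gen_cube_on_def k_def m_assoc)
    moreover have "(\<lambda>\<sigma>. gen_cube_on G I h \<eta> \<sigma> \<otimes> gen_cube_on G I k (\<eta> \<union> \<omega>) \<sigma>)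
        \<in> HK_on G I (\<lambda>i. Gs (Suc i))"
      using gen(1,2) \<omega> k by (intro HK_on.mult HK_on.gen) auto
    ultimately show ?case by simp
  next
    case (mult c c')
    have "(\<lambda>\<sigma>. inv (?a \<sigma>) \<otimes> (c \<sigma> \<otimes> c' \<sigma>) \<otimes> ?a \<sigma>)
        = (\<lambda>\<sigma>. (inv (?a \<sigma>) \<otimes> c \<sigma> \<otimes> ?a \<sigma>) \<otimes> (inv (?a \<sigma>) \<otimes> c' \<sigma> \<otimes> ?a \<sigma>))"
      using ac HK_on_carrier[OF f'] mult(1,3) by (simp add: fun_eq_iff m_assoc)
    then show ?case using HK_on.mult[OF mult(2,4)] by simp
  qed
qed

lemma HK_on_conj:
  assumes f: "group_filtration G Gs" and a: "a \<in> HK_on G I Gs"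
    and b: "b \<in> HK_on G I (\<lambda>i. Gs (Suc i))"
  shows "(\<lambda>\<sigma>. inv (a \<sigma>) \<otimes> b \<sigma> \<otimes> a \<sigma>) \<in> HK_on G I (\<lambda>i. Gs (Suc i))"
  using f a b
proof (induct arbitrary: b rule: HK_on_gen_induct)
  case one
  then show ?case using HK_on_carrier[OF group_filtration_shift[OF f] one] by simp
next
  case (gen \<omega> g)
  then show ?case by (rule HK_on_conj_gen_cube[OF f])
next
  case (mult a1 a2)
  have "(\<lambda>\<sigma>. inv (a1 \<sigma> \<otimes> a2 \<sigma>) \<otimes> b \<sigma> \<otimes> (a1 \<sigma> \<otimes> a2 \<sigma>))
      = (\<lambda>\<sigma>. inv (a2 \<sigma>) \<otimes> (inv (a1 \<sigma>) \<otimes> b \<sigma> \<otimes> a1 \<sigma>) \<otimes> a2 \<sigma>)"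
    using HK_on_carrier[OF f] HK_on_carrier[OF group_filtration_shift[OF f]] mult(1,3,5)
    by (simp add: fun_eq_iff m_assoc inv_mult_group)
  then show ?case using mult(4)[OF mult(2)[OF mult(5)]] by simp
qed

lemma cube_deriv_HK_on:
  assumes f: "group_filtration G Gs" and m: "m \<notin> J" and J: "finite J"
    and c: "c \<in> HK_on G (insert m J) Gs"
  shows "cube_deriv G m c \<in> HK_on G J (\<lambda>i. Gs (Suc i))"
  using f c
proof (induct rule: HK_on_gen_induct)
  case one
  have "cube_deriv G m (\<lambda>\<sigma>. \<one>) = (\<lambda>\<sigma>. \<one>)" by (simp add: fun_eq_iff cube_deriv_def)
  then show ?case by (simp add: HK_on.one)
next
  case (gen \<omega> g)
  have gc: "g \<in> carrier G" using subgroup.mem_carrier[OF group_filtration_subgroup[OF f] gen(2)] .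
  show ?case
  proof (cases "m \<in> \<omega>")
    case True
    have "cube_deriv G m (gen_cube_on G (insert m J) g \<omega>) = gen_cube_on G J g (\<omega> - {m})"
      using True m gc by (auto simp: fun_eq_iff cube_deriv_def gen_cube_on_def)
    moreover have "card \<omega> = Suc (card (\<omega> - {m}))"
      using True J gen(1) by (metis card_Suc_Diff1 finite_insert finite_subset)
    moreover have "\<omega> - {m} \<subseteq> J" using gen(1) by blast
    ultimately show ?thesis using gen(2) HK_on.gen[of "\<omega> - {m}" J g] by simp
  next
    case False
    then have "cube_deriv G m (gen_cube_on G (insert m J) g \<omega>) = (\<lambda>\<sigma>. \<one>)"
      using gc by (auto simp: fun_eq_iff cube_deriv_def gen_cube_on_def)
    then show ?thesis by (simp add: HK_on.one)
  qed
next
  case (mult c c')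
  let ?a = "cube_restrict G J c'"
  have a: "?a \<in> HK_on G J Gs" using cube_restrict_HK_on[OF mult(3)] by blast
  have cc: "c \<sigma> \<in> carrier G" "c' \<sigma> \<in> carrier G" for \<sigma>
    using HK_on_carrier[OF f] mult(1,3) by blast+
  text \<open>Outside \<open>J\<close> the derivative of \<open>c\<close> vanishes, so conjugating it by \<open>c'\<close> or by its
    restriction to \<open>J\<close> is the same.\<close>
  have "cube_deriv G m (\<lambda>\<sigma>. c \<sigma> \<otimes> c' \<sigma>) \<sigma>
      = (inv (?a \<sigma>) \<otimes> cube_deriv G m c \<sigma> \<otimes> ?a \<sigma>) \<otimes> cube_deriv G m c' \<sigma>" for \<sigma>
  proof (cases "\<sigma> \<subseteq> J")
    case False
    then have "cube_deriv G m c \<sigma> = \<one>" using HK_on_outside[OF mult(2)] by blast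
    then show ?thesis using False cc by (simp add: cube_deriv_mult[OF cc(1) cc(2)] cube_restrict_def)
  qed (simp add: cube_deriv_mult[OF cc(1) cc(2)] cube_restrict_def)
  then show ?case using HK_on.mult[OF HK_on_conj[OF f a mult(2)] mult(4)] by (simp add: fun_eq_iff)
qed

lemma cube_restrict_insert_HK_on:
  assumes f: "group_filtration G Gs" and m: "m \<notin> J" and J: "finite J"
    and x: "cube_restrict G J x \<in> HK_on G J Gs" and y: "y \<in> HK_on G J (\<lambda>i. Gs (Suc i))"
    and step: "\<And>\<sigma>. \<sigma> \<subseteq> J \<Longrightarrow> x (insert m \<sigma>) = x \<sigma> \<otimes> y \<sigma>"
  shows "cube_restrict G (insert m J) x \<in> HK_on G (insert m J) Gs"
proof -
  have "(\<lambda>\<sigma>. if True then cube_restrict G J x (\<sigma> - {m}) else \<one>) \<in> HK_on G (insert m J) Gs"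
  proof (rule HK_on_reindex[OF x])
    fix \<omega> g assume \<omega>: "\<omega> \<subseteq> J" and g: "g \<in> Gs (card \<omega>)"
    have "(\<lambda>\<sigma>. if True then gen_cube_on G J g \<omega> (\<sigma> - {m}) else \<one>) = gen_cube_on G (insert m J) g \<omega>"
      using \<omega> m by (auto simp: fun_eq_iff gen_cube_on_def)
    then show "(\<lambda>\<sigma>. if True then gen_cube_on G J g \<omega> (\<sigma> - {m}) else \<one>) \<in> HK_on G (insert m J) Gs"
      using \<omega> g by (auto intro: HK_on.gen)
  qed
  moreover have "(\<lambda>\<sigma>. if m \<in> \<sigma> then y (\<sigma> - {m}) else \<one>) \<in> HK_on G (insert m J) Gs"
  proof (rule HK_on_reindex[OF y])
    fix \<omega> g assume \<omega>: "\<omega> \<subseteq> J" and g: "g \<in> Gs (Suc (card \<omega>))"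
    have "(\<lambda>\<sigma>. if m \<in> \<sigma> then gen_cube_on G J g \<omega> (\<sigma> - {m}) else \<one>) = gen_cube_on G (insert m J) g (insert m \<omega>)"
      using \<omega> m by (auto simp: fun_eq_iff gen_cube_on_def)
    moreover have "card (insert m \<omega>) = Suc (card \<omega>)"
      using \<omega> m finite_subset[OF \<omega> J] by (subst card_insert_disjoint) auto
    ultimately show "(\<lambda>\<sigma>. if m \<in> \<sigma> then gen_cube_on G J g \<omega> (\<sigma> - {m}) else \<one>) \<in> HK_on G (insert m J) Gs"
      using \<omega> g by (auto intro: HK_on.gen)
  qed
  ultimately have "(\<lambda>\<sigma>. cube_restrict G J x (\<sigma> - {m}) \<otimes> (if m \<in> \<sigma> then y (\<sigma> - {m}) else \<one>))
      \<in> HK_on G (insert m J) Gs"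
    using HK_on.mult by fastforce
  moreover have "cube_restrict G J x (\<sigma> - {m}) \<otimes> (if m \<in> \<sigma> then y (\<sigma> - {m}) else \<one>)
      = cube_restrict G (insert m J) x \<sigma>" for \<sigma>
  proof (cases "\<sigma> \<subseteq> insert m J")
    case True
    then have "\<sigma> - {m} \<subseteq> J" by blast
    then have "x (\<sigma> - {m}) \<in> carrier G"
      using HK_on_carrier[OF f x, of "\<sigma> - {m}"] by (simp add: cube_restrict_def)
    then show ?thesis
      using True step[of "\<sigma> - {m}"] by (auto simp: cube_restrict_def subset_insert_iff insert_absorb)
  next
    case False
    then show ?thesis using HK_on_outside[OF y, of "\<sigma> - {m}"] by (auto simp: cube_restrict_def)
  qed
  ultimately show ?thesis by (simp add: fun_eq_iff)
qed

lemma HK_on_top_vertex_decomp: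
  assumes "finite I" "group_filtration G Gs" "subgroup \<Gamma> G" "c \<in> HK_on G I Gs"
    and "\<And>\<beta>. \<beta> \<subset> I \<Longrightarrow> c \<beta> \<in> \<Gamma>"
  shows "\<exists>n\<in>Gs (card I). \<exists>\<gamma>\<in>\<Gamma>. c I = n \<otimes> \<gamma>"
  using assms
proof (induct I arbitrary: Gs c rule: finite_induct)
  case empty
  then show ?case
    using HK_on_level_0[OF empty(1,3)] HK_on_carrier[OF empty(1,3)] subgroup.one_closed[OF empty(2)]
    by (metis card.empty r_one)
next
  case (insert m J)
  note f = insert(4) and \<Gamma> = insert(5) and c = insert(6) and lower = insert(7)
  have cc: "c \<sigma> \<in> carrier G" for \<sigma> using HK_on_carrier[OF f c] .
  let ?D = "cube_deriv G m c"
  have "?D \<beta> \<in> \<Gamma>" if "\<beta> \<subset> J" for \<beta>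
  proof -
    have "m \<notin> \<beta>" "\<beta> \<subset> insert m J" "insert m \<beta> \<subset> insert m J" using that insert(2) by auto
    then show ?thesis
      using lower subgroup.m_closed[OF \<Gamma>] subgroup.m_inv_closed[OF \<Gamma>] by (simp add: cube_deriv_def)
  qed
  then obtain n \<gamma> where n: "n \<in> Gs (Suc (card J))" and \<gamma>: "\<gamma> \<in> \<Gamma>" and D: "?D J = n \<otimes> \<gamma>"
    using insert(3)[OF group_filtration_shift[OF f] \<Gamma> cube_deriv_HK_on[OF f insert(2,1) c]] by auto
  have nc: "n \<in> carrier G" and gc: "\<gamma> \<in> carrier G"
    using subgroup.mem_carrier[OF group_filtration_subgroup[OF f] n] subgroup.mem_carrier[OF \<Gamma> \<gamma>] .
  text \<open>Move the \<open>\<Gamma>\<close>-vertex \<open>c J\<close> past \<open>n\<close>; normality of the filtration keeps the level.\<close>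
  have "c (insert m J) = c J \<otimes> ?D J" using cc insert(2) by (simp add: cube_deriv_def)
  also have "\<dots> = (c J \<otimes> n \<otimes> inv (c J)) \<otimes> (c J \<otimes> \<gamma>)" using D cc nc gc by (simp add: m_assoc)
  finally have "c (insert m J) = (c J \<otimes> n \<otimes> inv (c J)) \<otimes> (c J \<otimes> \<gamma>)" .
  moreover have "c J \<otimes> n \<otimes> inv (c J) \<in> Gs (card (insert m J))"
    using group_filtration_conj[OF f inv_closed[OF cc] n] cc insert(1,2) by simp
  moreover have "c J \<otimes> \<gamma> \<in> \<Gamma>" using lower[of J] insert(2) \<gamma> subgroup.m_closed[OF \<Gamma>] by blast
  ultimately show ?case by blast
qed

lemma faces_HK_on_carrier:
  assumes f: "group_filtration G Gs"
    and faces: "\<And>i. i \<in> I \<Longrightarrow> cube_restrict G (I - {i}) x \<in> HK_on G (I - {i}) Gs"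
    and \<sigma>: "\<sigma> \<subset> I"
  shows "x \<sigma> \<in> carrier G"
proof -
  obtain i where "i \<in> I - \<sigma>" using psubset_imp_ex_mem[OF \<sigma>] by blast
  then have i: "i \<in> I" "\<sigma> \<subseteq> I - {i}" using \<sigma> by blast+
  show ?thesis using HK_on_carrier[OF f faces[OF i(1)], of \<sigma>] i(2) by (simp add: cube_restrict_def)
qed

lemma HK_on_complete_corner:
  assumes "finite I" "group_filtration G Gs"
    and "\<And>i. i \<in> I \<Longrightarrow> cube_restrict G (I - {i}) x \<in> HK_on G (I - {i}) Gs"
  shows "\<exists>t. cube_restrict G I (x(I := t)) \<in> HK_on G I Gs"
  using assms
proof (induct I arbitrary: Gs x rule: finite_induct)
  case empty
  have "cube_restrict G {} (x({} := \<one>)) = (\<lambda>\<sigma>. \<one>)"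
    by (rule ext) (simp add: cube_restrict_def)
  then have "cube_restrict G {} (x({} := \<one>)) \<in> HK_on G {} Gs" by (simp only: HK_on.one)
  then show ?case by blast
next
  case (insert m J)
  note f = insert(4) and faces = insert(5)
  have xc: "x \<sigma> \<in> carrier G" if "\<sigma> \<subset> insert m J" for \<sigma>
    using faces_HK_on_carrier[OF f faces that] .
  define d where "d = (\<lambda>\<sigma>. inv (x \<sigma>) \<otimes> x (insert m \<sigma>))"
  have d_faces: "cube_restrict G (J - {i}) d \<in> HK_on G (J - {i}) (\<lambda>i. Gs (Suc i))"
    if i: "i \<in> J" for i
  proof -
    have "insert m (J - {i}) = insert m J - {i}" using i insert(2) by auto
    then have "cube_restrict G (insert m (J - {i})) x \<in> HK_on G (insert m (J - {i})) Gs"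
      using faces[of i] i by simp
    then have "cube_deriv G m (cube_restrict G (insert m (J - {i})) x) \<in> HK_on G (J - {i}) (\<lambda>i. Gs (Suc i))"
      using cube_deriv_HK_on[OF f] insert(1,2) by blast
    then show ?thesis using insert(2) by (simp add: cube_deriv_restrict d_def)
  qed
  then obtain t where t: "cube_restrict G J (d(J := t)) \<in> HK_on G J (\<lambda>i. Gs (Suc i))"
    using insert(3)[OF group_filtration_shift[OF f] d_faces] by blast
  let ?x = "x(insert m J := x J \<otimes> t)"
  have "cube_restrict G J ?x = cube_restrict G J x"
    using insert(2) by (auto simp: fun_eq_iff cube_restrict_def)
  moreover have "cube_restrict G J x \<in> HK_on G J Gs" using faces[of m] insert(2) by simp
  moreover have "?x (insert m \<sigma>) = ?x \<sigma> \<otimes> cube_restrict G J (d(J := t)) \<sigma>" if "\<sigma> \<subseteq> J" for \<sigma>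
  proof (cases "\<sigma> = J")
    case True
    have "J \<noteq> insert m J" using insert(2) by blast
    then show ?thesis using True by (simp add: cube_restrict_def)
  next
    case False
    have "\<sigma> \<subset> insert m J" using that insert(2) by blast
    moreover have "insert m \<sigma> \<subset> insert m J" using that False insert(2) by auto
    moreover have "\<sigma> \<noteq> insert m J" "insert m \<sigma> \<noteq> insert m J" using calculation by blast+
    ultimately show ?thesis using that False xc by (simp add: cube_restrict_def d_def)
  qed
  ultimately have "cube_restrict G (insert m J) ?x \<in> HK_on G (insert m J) Gs"
    using cube_restrict_insert_HK_on[OF f insert(2,1) _ t] by simp
  then show ?case by blast
qed

end

lemma FE_subset: "\<alpha> \<in> FE \<Longrightarrow> \<sigma> \<subseteq> \<alpha> \<Longrightarrow> \<sigma> \<in> FE"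
  unfolding FE_def using finite_subset by blast

lemma parallelepiped_subset_iff:
  assumes cover: "\<eta> \<subseteq> a0 \<union> \<Union>(A ` J)" and A0: "\<forall>j\<in>J. a0 \<inter> A j = {}"
    and disj: "\<forall>j\<in>J. \<forall>j'\<in>J. j \<noteq> j' \<longrightarrow> A j \<inter> A j' = {}" and \<omega>: "\<omega> \<subseteq> J"
  shows "\<eta> \<subseteq> a0 \<union> \<Union>(A ` \<omega>) \<longleftrightarrow> {j\<in>J. A j \<inter> \<eta> \<noteq> {}} \<subseteq> \<omega>"
proof
  assume \<eta>: "\<eta> \<subseteq> a0 \<union> \<Union>(A ` \<omega>)"
  show "{j\<in>J. A j \<inter> \<eta> \<noteq> {}} \<subseteq> \<omega>"
  proof
    fix j assume "j \<in> {j\<in>J. A j \<inter> \<eta> \<noteq> {}}"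
    then obtain y where j: "j \<in> J" and y: "y \<in> A j" "y \<in> \<eta>" by blast
    then have "y \<notin> a0" using A0 by blast
    then obtain j' where j': "j' \<in> \<omega>" "y \<in> A j'" using \<eta> y(2) by blast
    then have "j = j'" using disj \<omega> j y(1) by blast
    then show "j \<in> \<omega>" using j' by simp
  qed
next
  assume sub: "{j\<in>J. A j \<inter> \<eta> \<noteq> {}} \<subseteq> \<omega>"
  show "\<eta> \<subseteq> a0 \<union> \<Union>(A ` \<omega>)"
  proof
    fix y assume y: "y \<in> \<eta>"
    show "y \<in> a0 \<union> \<Union>(A ` \<omega>)"
    proof (cases "y \<in> a0")
      case False
      then obtain j where j: "j \<in> J" "y \<in> A j" using cover y by blast
      then have "j \<in> \<omega>" using sub y by blast
      then show ?thesis using j by blast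
    qed simp
  qed
qed

lemma card_meeting_le:
  assumes "finite \<eta>" and disj: "\<forall>j\<in>J. \<forall>j'\<in>J. j \<noteq> j' \<longrightarrow> A j \<inter> A j' = {}"
  shows "card {j\<in>J. A j \<inter> \<eta> \<noteq> {}} \<le> card \<eta>"
proof -
  define f where "f j = (SOME y. y \<in> A j \<inter> \<eta>)" for j
  have f: "f j \<in> A j \<inter> \<eta>" if "A j \<inter> \<eta> \<noteq> {}" for j
    unfolding f_def by (rule someI_ex) (use that in blast)
  have "inj_on f {j\<in>J. A j \<inter> \<eta> \<noteq> {}}"
  proof (rule inj_onI)
    fix j j' assume j: "j \<in> {j\<in>J. A j \<inter> \<eta> \<noteq> {}}" and j': "j' \<in> {j\<in>J. A j \<inter> \<eta> \<noteq> {}}"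
      and "f j = f j'"
    then have "f j \<in> A j \<inter> A j'" using f[of j] f[of j'] by simp
    then show "j = j'" using disj j j' by blast
  qed
  moreover have "f ` {j\<in>J. A j \<inter> \<eta> \<noteq> {}} \<subseteq> \<eta>" using f by blast
  ultimately show ?thesis using card_inj_on_le assms(1) by blast
qed

definition parallelepipeds_in_HK :: "('a, 'b) monoid_scheme \<Rightarrow> (nat \<Rightarrow> 'a set) \<Rightarrow> 'a set \<Rightarrow> (nat set \<Rightarrow> 'a set) \<Rightarrow> bool" where
  "parallelepipeds_in_HK G Gs \<Gamma> fb \<longleftrightarrow> (\<forall>k a. parallelepiped_base k a \<longrightarrow>
     in_HK_quot G k Gs \<Gamma> (\<lambda>\<omega>. fb (parallelepiped_vertex a \<omega>)))"

context group
begin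

lemma HK_on_pullback:
  assumes c: "c \<in> HK_on G I Gs" and I: "finite I" and f: "group_filtration G Gs"
    and a0: "a0 \<subseteq> I" and AI: "\<forall>j\<in>J. A j \<subseteq> I" and A0: "\<forall>j\<in>J. a0 \<inter> A j = {}"
    and disj: "\<forall>j\<in>J. \<forall>j'\<in>J. j \<noteq> j' \<longrightarrow> A j \<inter> A j' = {}"
  shows "(\<lambda>\<omega>. if \<omega> \<subseteq> J then c (a0 \<union> \<Union>(A ` \<omega>)) else \<one>) \<in> HK_on G J Gs"
proof (rule HK_on_reindex[OF c])
  fix \<eta> g assume \<eta>: "\<eta> \<subseteq> I" and g: "g \<in> Gs (card \<eta>)"
  show "(\<lambda>\<omega>. if \<omega> \<subseteq> J then gen_cube_on G I g \<eta> (a0 \<union> \<Union>(A ` \<omega>)) else \<one>) \<in> HK_on G J Gs"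
  proof (cases "\<eta> \<subseteq> a0 \<union> \<Union>(A ` J)")
    case True
    note covered = True
    let ?\<eta>' = "{j\<in>J. A j \<inter> \<eta> \<noteq> {}}"
    have "(if \<omega> \<subseteq> J then gen_cube_on G I g \<eta> (a0 \<union> \<Union>(A ` \<omega>)) else \<one>) = gen_cube_on G J g ?\<eta>' \<omega>"
      for \<omega>
    proof (cases "\<omega> \<subseteq> J")
      case True
      then have "a0 \<union> \<Union>(A ` \<omega>) \<subseteq> I" using a0 AI by blast
      then show ?thesis
        using True parallelepiped_subset_iff[OF covered A0 disj True] by (simp add: gen_cube_on_def)
    qed (simp add: gen_cube_on_def)
    moreover have "g \<in> Gs (card ?\<eta>')"
      using g group_filtration_antimono[OF f card_meeting_le[OF finite_subset[OF \<eta> I] disj]] by blast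
    moreover have "?\<eta>' \<subseteq> J" by blast
    ultimately show ?thesis using HK_on.gen[of ?\<eta>' J g Gs G] by presburger
  next
    case False
    then have "\<not> \<eta> \<subseteq> a0 \<union> \<Union>(A ` \<omega>)" if "\<omega> \<subseteq> J" for \<omega> using that by blast
    then have "(if \<omega> \<subseteq> J then gen_cube_on G I g \<eta> (a0 \<union> \<Union>(A ` \<omega>)) else \<one>) = \<one>" for \<omega>
      by (simp add: gen_cube_on_def)
    then show ?thesis by (simp add: HK_on.one)
  qed
qed

lemma cube_restrict_deriv_HK_on:
  assumes f: "group_filtration G Gs" and \<alpha>: "finite \<alpha>" and \<beta>: "finite \<beta>"
    and c: "cube_restrict G (\<alpha> \<union> \<beta>) g \<in> HK_on G (\<alpha> \<union> \<beta>) Gs"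
  shows "cube_restrict G \<alpha> (\<lambda>\<sigma>. inv (g (\<sigma> - \<beta>)) \<otimes> g (\<sigma> \<union> \<beta>)) \<in> HK_on G \<alpha> (\<lambda>i. Gs (Suc i))"
proof -
  obtain m :: nat where m: "m \<notin> \<alpha> \<union> \<beta>"
    using ex_new_if_finite[OF infinite_UNIV_nat] \<alpha> \<beta> by blast
  text \<open>The pair \<open>(\<sigma> - \<beta>, \<sigma> \<union> \<beta>)\<close> is the edge in direction \<open>m\<close> of the parallelepiped
    with base \<open>{}\<close>, side \<open>\<beta>\<close> in direction \<open>m\<close>, and sides \<open>{j} - \<beta>\<close> for \<open>j \<in> \<alpha>\<close>.\<close>
  define A where "A j = (if j = m then \<beta> else {j} - \<beta>)" for j
  let ?P = "\<lambda>\<omega>. if \<omega> \<subseteq> insert m \<alpha> then cube_restrict G (\<alpha> \<union> \<beta>) g ({} \<union> \<Union>(A ` \<omega>)) else \<one>"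
  have "?P \<in> HK_on G (insert m \<alpha>) Gs"
    by (rule HK_on_pullback[OF c _ f]) (use \<alpha> \<beta> in \<open>auto simp: A_def\<close>)
  then have "cube_deriv G m ?P \<in> HK_on G \<alpha> (\<lambda>i. Gs (Suc i))"
    using cube_deriv_HK_on[OF f _ \<alpha>] m by blast
  moreover have "cube_restrict G \<alpha> (\<lambda>\<sigma>. inv (g (\<sigma> - \<beta>)) \<otimes> g (\<sigma> \<union> \<beta>)) = cube_deriv G m ?P"
  proof
    fix \<sigma>
    consider "m \<in> \<sigma>" | "m \<notin> \<sigma>" "\<sigma> \<subseteq> \<alpha>" | "m \<notin> \<sigma>" "\<not> \<sigma> \<subseteq> \<alpha>" by blast
    then show "cube_restrict G \<alpha> (\<lambda>\<sigma>. inv (g (\<sigma> - \<beta>)) \<otimes> g (\<sigma> \<union> \<beta>)) \<sigma> = cube_deriv G m ?P \<sigma>"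
    proof cases
      case 1
      then have "\<not> \<sigma> \<subseteq> \<alpha>" using m by blast
      then show ?thesis using 1 by (simp add: cube_restrict_def cube_deriv_def)
    next
      case 2
      then have "\<Union>(A ` \<sigma>) = \<sigma> - \<beta>" "\<Union>(A ` insert m \<sigma>) = \<sigma> \<union> \<beta>"
        by (auto simp: A_def split: if_splits)
      moreover have "\<sigma> - \<beta> \<subseteq> \<alpha> \<union> \<beta>" "\<sigma> \<union> \<beta> \<subseteq> \<alpha> \<union> \<beta>" "\<sigma> \<subseteq> insert m \<alpha>" "insert m \<sigma> \<subseteq> insert m \<alpha>"
        using 2 by blast+
      ultimately show ?thesis using 2 by (simp add: cube_restrict_def cube_deriv_def)
    next
      case 3
      then have "\<not> \<sigma> \<subseteq> insert m \<alpha>" "\<not> insert m \<sigma> \<subseteq> insert m \<alpha>" by blast+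
      then show ?thesis using 3 by (simp add: cube_restrict_def cube_deriv_def inv_one)
    qed
  qed
  ultimately show ?thesis by simp
qed

lemma derivs_imp_restrict_HK_on:
  assumes f: "group_filtration G Gs" and g0: "\<forall>\<alpha>\<in>FE. g \<alpha> \<in> Gs 0"
    and derivs: "\<And>m. m \<noteq> 0 \<Longrightarrow> \<exists>h. (\<forall>\<alpha>\<in>FE. cube_restrict G \<alpha> h \<in> HK_on G \<alpha> (\<lambda>i. Gs (Suc i))) \<and>
        (\<forall>\<alpha>\<in>FE. m \<notin> \<alpha> \<longrightarrow> h \<alpha> = inv (g \<alpha>) \<otimes> g (insert m \<alpha>))"
    and \<alpha>: "\<alpha> \<in> FE"
  shows "cube_restrict G \<alpha> g \<in> HK_on G \<alpha> Gs"
proof -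
  have gc: "g \<alpha> \<in> carrier G" if "\<alpha> \<in> FE" for \<alpha>
    using g0 that subgroup.mem_carrier[OF group_filtration_subgroup[OF f]] by blast
  have "cube_restrict G \<alpha> g \<in> HK_on G \<alpha> Gs" if "finite \<alpha>" "0 \<notin> \<alpha>" for \<alpha>
    using that
  proof (induct \<alpha> rule: finite_induct)
    case empty
    have "cube_restrict G {} g = gen_cube_on G {} (g {}) {}"
      by (auto simp: cube_restrict_def gen_cube_on_def fun_eq_iff)
    moreover have "g {} \<in> Gs (card {})" using g0 by (simp add: FE_def)
    ultimately show ?case by (simp add: HK_on.gen)
  next
    case (insert m J)
    have J: "J \<in> FE" using insert(1,4) by (simp add: FE_def)
    obtain h where h: "\<forall>\<alpha>\<in>FE. cube_restrict G \<alpha> h \<in> HK_on G \<alpha> (\<lambda>i. Gs (Suc i))"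
      and h_deriv: "\<forall>\<alpha>\<in>FE. m \<notin> \<alpha> \<longrightarrow> h \<alpha> = inv (g \<alpha>) \<otimes> g (insert m \<alpha>)"
      using derivs[of m] insert(4) by auto
    have "g (insert m \<sigma>) = g \<sigma> \<otimes> cube_restrict G J h \<sigma>" if "\<sigma> \<subseteq> J" for \<sigma>
    proof -
      have "\<sigma> \<in> FE" "insert m \<sigma> \<in> FE" using that insert(1,4) by (auto simp: FE_def finite_subset)
      then show ?thesis using that h_deriv insert(2) gc by (auto simp: cube_restrict_def)
    qed
    then show ?case using cube_restrict_insert_HK_on[OF f insert(2,1)] insert(3,4) h J by blast
  qed
  then show ?thesis using \<alpha> by (simp add: FE_def)
qed

lemma poly_map_restrict_HK_on:
  assumes "poly_map G Gs g" and "group_filtration G Gs" and "\<alpha> \<in> FE"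
  shows "cube_restrict G \<alpha> g \<in> HK_on G \<alpha> Gs"
proof -
  have "group_filtration G Gs \<longrightarrow> (\<forall>\<alpha>\<in>FE. cube_restrict G \<alpha> g \<in> HK_on G \<alpha> Gs)"
    using assms(1)
  proof induct
    case (triv Gs g)
    have "cube_restrict G \<alpha> g = (\<lambda>\<sigma>. \<one>)" if "\<alpha> \<in> FE" for \<alpha>
      using triv(2) FE_subset[OF that] by (auto simp: cube_restrict_def fun_eq_iff)
    then show ?case by (simp add: HK_on.one)
  next
    case (step g Gs)
    show ?case
    proof
      assume f: "group_filtration G Gs"
      have derivs: "\<exists>h. (\<forall>\<alpha>\<in>FE. cube_restrict G \<alpha> h \<in> HK_on G \<alpha> (\<lambda>i. Gs (Suc i))) \<and>
          (\<forall>\<alpha>\<in>FE. m \<notin> \<alpha> \<longrightarrow> h \<alpha> = inv (g \<alpha>) \<otimes> g (insert m \<alpha>))" if "m \<noteq> 0" for m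
      proof -
        have "{m} \<in> FE" using that by (simp add: FE_def)
        then obtain h where "group_filtration G (\<lambda>i. Gs (Suc i)) \<longrightarrow>
            (\<forall>\<alpha>\<in>FE. cube_restrict G \<alpha> h \<in> HK_on G \<alpha> (\<lambda>i. Gs (Suc i)))"
          and "\<forall>\<alpha>\<in>FE. \<alpha> \<inter> {m} = {} \<longrightarrow> h \<alpha> = inv (g \<alpha>) \<otimes> g (\<alpha> \<union> {m})"
          using step(2) by blast
        then show ?thesis using group_filtration_shift[OF f] by (intro exI[of _ h]) simp
      qed
      show "\<forall>\<alpha>\<in>FE. cube_restrict G \<alpha> g \<in> HK_on G \<alpha> Gs"
        using derivs_imp_restrict_HK_on[OF f step(1) derivs] by blast
    qed
  qed
  then show ?thesis using assms(2,3) by blast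
qed

lemma HK_on_restrict_imp_poly_map:
  assumes "group_filtration G Gs" and "Gs N = {\<one>}"
    and "\<And>\<alpha>. \<alpha> \<in> FE \<Longrightarrow> cube_restrict G \<alpha> g \<in> HK_on G \<alpha> Gs"
  shows "poly_map G Gs g"
  using assms
proof (induct N arbitrary: Gs g)
  case 0
  have "g \<alpha> = \<one>" if "\<alpha> \<in> FE" for \<alpha>
    using HK_on_level_0[OF 0(1) 0(3)[OF that], of \<alpha>] 0(2) by (simp add: cube_restrict_def)
  then show ?case using 0(2) by (intro poly_map.triv) auto
next
  case (Suc N)
  note f = Suc(2)
  show ?case
  proof (rule poly_map.step)
    show "\<forall>\<alpha>\<in>FE. g \<alpha> \<in> Gs 0"
    proof
      fix \<alpha> assume "\<alpha> \<in> FE"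
      then show "g \<alpha> \<in> Gs 0" using HK_on_level_0[OF f Suc(4), of \<alpha> \<alpha>] by (simp add: cube_restrict_def)
    qed
    show "\<forall>\<beta>\<in>FE. \<exists>h. poly_map G (\<lambda>i. Gs (Suc i)) h \<and>
        (\<forall>\<alpha>\<in>FE. \<alpha> \<inter> \<beta> = {} \<longrightarrow> h \<alpha> = inv (g \<alpha>) \<otimes> g (\<alpha> \<union> \<beta>))"
    proof
      fix \<beta> assume \<beta>: "\<beta> \<in> FE"
      define h where "h \<alpha> = inv (g (\<alpha> - \<beta>)) \<otimes> g (\<alpha> \<union> \<beta>)" for \<alpha>
      have "poly_map G (\<lambda>i. Gs (Suc i)) h"
      proof (rule Suc(1)[OF group_filtration_shift[OF f]])
        show "Gs (Suc N) = {\<one>}" by (rule Suc(3))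
        fix \<alpha> assume \<alpha>: "\<alpha> \<in> FE"
        then have "\<alpha> \<union> \<beta> \<in> FE" using \<beta> by (simp add: FE_def)
        then show "cube_restrict G \<alpha> h \<in> HK_on G \<alpha> (\<lambda>i. Gs (Suc i))"
          unfolding h_def using cube_restrict_deriv_HK_on[OF f] Suc(4) \<alpha> \<beta> by (simp add: FE_def)
      qed
      moreover have "\<forall>\<alpha>\<in>FE. \<alpha> \<inter> \<beta> = {} \<longrightarrow> h \<alpha> = inv (g \<alpha>) \<otimes> g (\<alpha> \<union> \<beta>)"
        by (simp add: h_def Diff_triv)
      ultimately show "\<exists>h. poly_map G (\<lambda>i. Gs (Suc i)) h \<and>
          (\<forall>\<alpha>\<in>FE. \<alpha> \<inter> \<beta> = {} \<longrightarrow> h \<alpha> = inv (g \<alpha>) \<otimes> g (\<alpha> \<union> \<beta>))" by blast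
    qed
  qed
qed

lemma poly_map_quot_imp_parallelepipeds_in_HK:
  assumes f: "group_filtration G Gs" and "poly_map_quot G Gs \<Gamma> fb"
  shows "parallelepipeds_in_HK G Gs \<Gamma> fb"
  unfolding parallelepipeds_in_HK_def
proof (intro allI impI)
  obtain g where g: "poly_map G Gs g" and fg: "\<forall>\<alpha>\<in>FE. fb \<alpha> = g \<alpha> <# \<Gamma>"
    using assms(2) unfolding poly_map_quot_def by blast
  fix k a assume "parallelepiped_base k a"
  then have aFE: "\<forall>i\<le>k. a i \<in> FE" and disj: "\<forall>i\<le>k. \<forall>j\<le>k. i \<noteq> j \<longrightarrow> a i \<inter> a j = {}"
    unfolding parallelepiped_base_def by blast+
  let ?\<alpha> = "parallelepiped_vertex a {1..k}"
  have vFE: "parallelepiped_vertex a \<omega> \<in> FE" if "\<omega> \<subseteq> {1..k}" for \<omega>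
  proof -
    have "finite \<omega>" "\<forall>i\<in>\<omega>. a i \<in> FE" "a 0 \<in> FE" using that aFE finite_subset[OF that] by auto
    then show ?thesis by (auto simp: parallelepiped_vertex_def FE_def)
  qed
  have c: "cube_restrict G ?\<alpha> g \<in> HK_on G ?\<alpha> Gs"
    using poly_map_restrict_HK_on[OF g f vFE[OF order_refl]] .
  let ?c = "\<lambda>\<omega>. if \<omega> \<subseteq> {1..k} then cube_restrict G ?\<alpha> g (a 0 \<union> \<Union>(a ` \<omega>)) else \<one>"
  have "?c \<in> HK_on G {1..k} Gs"
  proof (rule HK_on_pullback[OF c _ f])
    show "finite ?\<alpha>" using vFE[of "{1..k}"] by (simp add: FE_def)
    show "a 0 \<subseteq> ?\<alpha>" "\<forall>j\<in>{1..k}. a j \<subseteq> ?\<alpha>"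
      unfolding parallelepiped_vertex_def by blast+
    show "\<forall>j\<in>{1..k}. a 0 \<inter> a j = {}"
      using disj by (simp add: Ball_def)
    show "\<forall>j\<in>{1..k}. \<forall>j'\<in>{1..k}. j \<noteq> j' \<longrightarrow> a j \<inter> a j' = {}"
      using disj by (simp add: Ball_def)
  qed
  moreover have "fb (parallelepiped_vertex a \<omega>) = ?c \<omega> <# \<Gamma>" if \<omega>: "\<omega> \<subseteq> {1..k}" for \<omega>
  proof -
    have "parallelepiped_vertex a \<omega> \<subseteq> ?\<alpha>" using \<omega> unfolding parallelepiped_vertex_def by blast
    then have "?c \<omega> = g (parallelepiped_vertex a \<omega>)"
      using \<omega> by (simp add: cube_restrict_def parallelepiped_vertex_def)
    then show ?thesis using fg vFE[OF \<omega>] by simp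
  qed
  ultimately show "in_HK_quot G k Gs \<Gamma> (\<lambda>\<omega>. fb (parallelepiped_vertex a \<omega>))"
    unfolding in_HK_quot_def HK_eq_HK_on by (intro bexI[of _ ?c] allI impI)
qed

lemma parallelepipeds_in_HK_imp_HK_on:
  assumes f: "group_filtration G Gs" and P: "parallelepipeds_in_HK G Gs \<Gamma> fb" and \<alpha>: "\<alpha> \<in> FE"
  shows "\<exists>c\<in>HK_on G \<alpha> Gs. \<forall>\<sigma>\<subseteq>\<alpha>. fb \<sigma> = c \<sigma> <# \<Gamma>"
proof -
  obtain k where k: "\<alpha> \<subseteq> {..k}" using \<alpha> finite_nat_iff_bounded_le unfolding FE_def by blast
  have \<alpha>k: "\<alpha> \<subseteq> {1..k}"
  proof
    fix i assume "i \<in> \<alpha>"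
    then show "i \<in> {1..k}" using k \<alpha> unfolding FE_def by (cases i) auto
  qed
  define a where "a i = (if i = 0 then {} else {i})" for i :: nat
  have "parallelepiped_base k a" by (auto simp: parallelepiped_base_def a_def FE_def)
  then obtain c where c: "c \<in> HK_on G {1..k} Gs"
    and fc: "\<forall>\<omega>. \<omega> \<subseteq> {1..k} \<longrightarrow> fb (parallelepiped_vertex a \<omega>) = c \<omega> <# \<Gamma>"
    using P unfolding parallelepipeds_in_HK_def in_HK_quot_def HK_eq_HK_on by blast
  have "parallelepiped_vertex a \<omega> = \<omega>" if "\<omega> \<subseteq> {1..k}" for \<omega>
    using that by (auto simp: parallelepiped_vertex_def a_def)
  then have "fb \<sigma> = cube_restrict G \<alpha> c \<sigma> <# \<Gamma>" if "\<sigma> \<subseteq> \<alpha>" for \<sigma>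
    using fc that \<alpha>k by (auto simp: cube_restrict_def)
  then show ?thesis using cube_restrict_HK_on[OF c \<alpha>k] by blast
qed

end

context group
begin

lemma l_coset_eq_imp_inv_mult_mem:
  assumes H: "subgroup H G" and x: "x \<in> carrier G" and y: "y \<in> carrier G" and eq: "x <# H = y <# H"
  shows "inv x \<otimes> y \<in> H"
proof -
  have "y \<in> y <# H" using y subgroup.one_closed[OF H] unfolding l_coset_def by force
  then obtain h where "h \<in> H" "y = x \<otimes> h" using eq unfolding l_coset_def by auto
  then show ?thesis using x subgroup.mem_carrier[OF H] by simp
qed

lemma l_coset_mult_mem:
  assumes H: "subgroup H G" and x: "x \<in> carrier G" and h: "h \<in> H"
  shows "(x \<otimes> h) <# H = x <# H"
proof -
  have hc: "h \<in> carrier G" using subgroup.mem_carrier[OF H h] .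
  have "(x \<otimes> h) <# H = x <# (h <# H)" using lcos_m_assoc[OF subgroup.subset[OF H] x hc] by simp
  also have "h <# H = H" using coset_join3[OF hc H h] .
  finally show ?thesis .
qed

lemma HK_on_lift_top_vertex:
  assumes I: "finite I" and f: "group_filtration G Gs" and \<Gamma>: "subgroup \<Gamma> G"
    and lower: "\<And>\<beta>. \<beta> \<subset> I \<Longrightarrow> fb \<beta> = g \<beta> <# \<Gamma> \<and> cube_restrict G \<beta> g \<in> HK_on G \<beta> Gs"
    and c: "c \<in> HK_on G I Gs" and fc: "\<And>\<sigma>. \<sigma> \<subseteq> I \<Longrightarrow> fb \<sigma> = c \<sigma> <# \<Gamma>"
  shows "\<exists>t. fb I = t <# \<Gamma> \<and> cube_restrict G I (g(I := t)) \<in> HK_on G I Gs"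
proof -
  have "cube_restrict G (I - {i}) g \<in> HK_on G (I - {i}) Gs" if "i \<in> I" for i
    using lower[of "I - {i}"] that by blast
  then obtain t0 where X: "cube_restrict G I (g(I := t0)) \<in> HK_on G I Gs"
    using HK_on_complete_corner[OF I f] by blast
  let ?x = "cube_restrict G I (g(I := t0))"
  have xc: "?x \<sigma> \<in> carrier G" and cc: "c \<sigma> \<in> carrier G" for \<sigma>
    using HK_on_carrier[OF f X] HK_on_carrier[OF f c] by auto
  have t0: "t0 \<in> carrier G" using xc[of I] by (simp add: cube_restrict_def)
  let ?d = "\<lambda>\<sigma>. inv (?x \<sigma>) \<otimes> c \<sigma>"
  have "?d \<beta> \<in> \<Gamma>" if \<beta>: "\<beta> \<subset> I" for \<beta>
  proof -
    have "?x \<beta> = g \<beta>" using \<beta> by (auto simp: cube_restrict_def)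
    moreover have "g \<beta> <# \<Gamma> = c \<beta> <# \<Gamma>" using lower[OF \<beta>] fc[of \<beta>] \<beta> by auto
    ultimately show ?thesis using l_coset_eq_imp_inv_mult_mem[OF \<Gamma>] xc[of \<beta>] cc by metis
  qed
  then obtain n \<gamma> where n: "n \<in> Gs (card I)" and \<gamma>: "\<gamma> \<in> \<Gamma>" and d: "?d I = n \<otimes> \<gamma>"
    using HK_on_top_vertex_decomp[OF I f \<Gamma> HK_on.mult[OF HK_on.inv[OF X] c]] by blast
  have nc: "n \<in> carrier G" and gc: "\<gamma> \<in> carrier G"
    using subgroup.mem_carrier[OF group_filtration_subgroup[OF f] n] subgroup.mem_carrier[OF \<Gamma> \<gamma>] .
  have "cube_restrict G I (g(I := t0 \<otimes> n)) \<sigma> = ?x \<sigma> \<otimes> gen_cube_on G I n I \<sigma>" for \<sigma>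
  proof (cases "\<sigma> = I")
    case False
    then have "\<not> (I \<subseteq> \<sigma> \<and> \<sigma> \<subseteq> I)" by blast
    then show ?thesis using False xc[of \<sigma>] by (cases "\<sigma> \<subseteq> I") (simp_all add: cube_restrict_def gen_cube_on_def)
  qed (simp add: cube_restrict_def gen_cube_on_def)
  then have "cube_restrict G I (g(I := t0 \<otimes> n)) = (\<lambda>\<sigma>. ?x \<sigma> \<otimes> gen_cube_on G I n I \<sigma>)" ..
  then have "cube_restrict G I (g(I := t0 \<otimes> n)) \<in> HK_on G I Gs"
    using HK_on.mult[OF X HK_on.gen[of I I n Gs G, OF subset_refl n]] by simp
  moreover have "c I = (t0 \<otimes> n) \<otimes> \<gamma>"
  proof -
    have "c I = ?x I \<otimes> ?d I" using xc cc by simp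
    then show ?thesis using d t0 nc gc by (simp add: cube_restrict_def m_assoc)
  qed
  then have "fb I = (t0 \<otimes> n) <# \<Gamma>"
    using fc[of I] l_coset_mult_mem[OF \<Gamma> _ \<gamma>] t0 nc by simp
  ultimately show ?thesis by blast
qed

end

text \<open>Lifts \<open>g(\<alpha>)\<close> of the cosets \<open>fb(\<alpha>)\<close>, chosen by well-founded recursion on \<open>\<subset>\<close> so that
  each one completes the lifts already chosen on the proper subsets of \<open>\<alpha>\<close> to a cube.\<close>
definition coset_lift :: "('a, 'b) monoid_scheme \<Rightarrow> (nat \<Rightarrow> 'a set) \<Rightarrow> 'a set \<Rightarrow> (nat set \<Rightarrow> 'a set) \<Rightarrow> nat set \<Rightarrow> 'a" where
  "coset_lift G Gs \<Gamma> fb = wfrec finite_psubset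
     (\<lambda>h \<alpha>. SOME t. fb \<alpha> = t <#\<^bsub>G\<^esub> \<Gamma> \<and> cube_restrict G \<alpha> (h(\<alpha> := t)) \<in> HK_on G \<alpha> Gs)"

lemma coset_lift_eq:
  assumes "finite \<alpha>"
  shows "coset_lift G Gs \<Gamma> fb \<alpha> = (SOME t. fb \<alpha> = t <#\<^bsub>G\<^esub> \<Gamma> \<and>
    cube_restrict G \<alpha> ((coset_lift G Gs \<Gamma> fb)(\<alpha> := t)) \<in> HK_on G \<alpha> Gs)"
proof -
  have "((cut (coset_lift G Gs \<Gamma> fb) finite_psubset \<alpha>)(\<alpha> := t)) \<sigma> = ((coset_lift G Gs \<Gamma> fb)(\<alpha> := t)) \<sigma>"
    if "\<sigma> \<subseteq> \<alpha>" for \<sigma> t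
    using that assms by (cases "\<sigma> = \<alpha>") (simp_all add: cut_def finite_psubset_def psubset_eq)
  then have "cube_restrict G \<alpha> ((cut (coset_lift G Gs \<Gamma> fb) finite_psubset \<alpha>)(\<alpha> := t))
      = cube_restrict G \<alpha> ((coset_lift G Gs \<Gamma> fb)(\<alpha> := t))" for t
    unfolding cube_restrict_def by (intro ext) simp
  moreover have "coset_lift G Gs \<Gamma> fb \<alpha> = (SOME t. fb \<alpha> = t <#\<^bsub>G\<^esub> \<Gamma> \<and>
      cube_restrict G \<alpha> ((cut (coset_lift G Gs \<Gamma> fb) finite_psubset \<alpha>)(\<alpha> := t)) \<in> HK_on G \<alpha> Gs)"
    unfolding coset_lift_def by (subst wfrec[OF wf_finite_psubset]) (rule refl)
  ultimately show ?thesis by simp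
qed

context group
begin

lemma coset_lift_correct:
  assumes f: "group_filtration G Gs" and \<Gamma>: "subgroup \<Gamma> G"
    and cubes: "\<And>\<alpha>. \<alpha> \<in> FE \<Longrightarrow> \<exists>c\<in>HK_on G \<alpha> Gs. \<forall>\<sigma>\<subseteq>\<alpha>. fb \<sigma> = c \<sigma> <# \<Gamma>"
    and \<alpha>: "\<alpha> \<in> FE"
  shows "fb \<alpha> = coset_lift G Gs \<Gamma> fb \<alpha> <# \<Gamma> \<and> cube_restrict G \<alpha> (coset_lift G Gs \<Gamma> fb) \<in> HK_on G \<alpha> Gs"
  using \<alpha>
proof (induct "card \<alpha>" arbitrary: \<alpha> rule: less_induct)
  case less
  let ?g = "coset_lift G Gs \<Gamma> fb"
  have fin: "finite \<alpha>" using less(2) by (simp add: FE_def)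
  have lower: "fb \<beta> = ?g \<beta> <# \<Gamma> \<and> cube_restrict G \<beta> ?g \<in> HK_on G \<beta> Gs" if "\<beta> \<subset> \<alpha>" for \<beta>
    using less(1)[OF psubset_card_mono[OF fin that] FE_subset[OF less(2)]] that by blast
  obtain c where c: "c \<in> HK_on G \<alpha> Gs" and fc: "\<forall>\<sigma>\<subseteq>\<alpha>. fb \<sigma> = c \<sigma> <# \<Gamma>"
    using cubes[OF less(2)] by blast
  have "\<exists>t. fb \<alpha> = t <# \<Gamma> \<and> cube_restrict G \<alpha> (?g(\<alpha> := t)) \<in> HK_on G \<alpha> Gs"
    using fc by (intro HK_on_lift_top_vertex[OF fin f \<Gamma> lower c]) auto
  from someI_ex[OF this] show ?case
    unfolding coset_lift_eq[OF fin, symmetric] by simp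
qed

lemma parallelepipeds_in_HK_imp_poly_map_quot:
  assumes f: "group_filtration G Gs" and \<Gamma>: "subgroup \<Gamma> G" and top: "Gs N = {\<one>}"
    and P: "parallelepipeds_in_HK G Gs \<Gamma> fb"
  shows "poly_map_quot G Gs \<Gamma> fb"
proof -
  let ?g = "coset_lift G Gs \<Gamma> fb"
  have good: "fb \<alpha> = ?g \<alpha> <# \<Gamma> \<and> cube_restrict G \<alpha> ?g \<in> HK_on G \<alpha> Gs" if "\<alpha> \<in> FE" for \<alpha>
    using coset_lift_correct[OF f \<Gamma> parallelepipeds_in_HK_imp_HK_on[OF f P] that] .
  then have "poly_map G Gs ?g" using HK_on_restrict_imp_poly_map[OF f top] by blast
  then show ?thesis unfolding poly_map_quot_def using good by blast
qed

end

theorem proposition2p10: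
  fixes G :: "('a, 'b) monoid_scheme" and T :: "'a topology"
    and Gs :: "nat \<Rightarrow> 'a set" and d :: nat and \<Gamma> :: "'a set"
    and fb :: "nat set \<Rightarrow> 'a set"
  assumes "lie_group G T"
    and "filtration G T Gs d"
    and "discrete_subgroup \<Gamma> G T"
    and "cocompact_in \<Gamma> (carrier G) G T"
    and "rational_filtration G T Gs \<Gamma>"
    and "\<forall>\<alpha>\<in>FE. \<exists>x\<in>carrier G. fb \<alpha> = x <#\<^bsub>G\<^esub> \<Gamma>"
  shows "poly_map_quot G Gs \<Gamma> fb \<longleftrightarrow>
    (\<forall>k a. parallelepiped_base k a \<longrightarrow>
       in_HK_quot G k Gs \<Gamma> (\<lambda>\<omega>. fb (parallelepiped_vertex a \<omega>)))"
proof -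
  have "group G" using assms(1) unfolding lie_group_def topological_group_def by blast
  then interpret group G .
  have f: "group_filtration G Gs" using filtration_imp_group_filtration[OF assms(2)] .
  have \<Gamma>: "subgroup \<Gamma> G" using assms(3) unfolding discrete_subgroup_def by blast
  have top: "Gs (Suc d) = {\<one>\<^bsub>G\<^esub>}" using assms(2) unfolding filtration_def by blast
  show ?thesis
    using poly_map_quot_imp_parallelepipeds_in_HK[OF f]
      parallelepipeds_in_HK_imp_poly_map_quot[OF f \<Gamma> top]
    unfolding parallelepipeds_in_HK_def by blast
qed

end
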